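(* Let $L$ be a finite set of axis-aligned line segments in the plane, and let $\mathcal{C}$ be the collection of associated subsets of the rectangular cells of the arrangement of $L$. For any three line segments $\ell, \ell', \ell'' \in L$, there are at most two subsets in $\mathcal{C}$ containing all three of $\ell, \ell', \ell''$.
   Context: A cell of the arrangement of $L$ is a maximal connected region of the plane not intersected by any segment of $L$. A cell is rectangular if its boundary is formed by exactly four segments of $L$; its associated subset is the set $\{\ell_1,\ell_2,\ell_3,\ell_4\}\subseteq L$ of these four bounding segments. $\mathcal{C}$ is the collection of associated subsets of all rectangular cells. *)

theory Defs
  imports "HOL-Analysis.Analysis"
begin

type_synonym point = "real \<times> real"

definition axis_segment :: "point set \<Rightarrow> bool" where
  "axis_segment s \<longleftrightarrow>
     (\<exists>a b. a \<noteq> b \<and> (fst a = fst b \<or> snd a = snd b) \<and> s = closed_segment a b)"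

definition cells :: "point set set \<Rightarrow> point set set" where
  "cells L = components (- \<Union>L)"

text \<open>Segments that contribute a (non-degenerate) part of the boundary of a cell.\<close>
definition bounding_segments :: "point set set \<Rightarrow> point set \<Rightarrow> point set set" where
  "bounding_segments L C = {l \<in> L. infinite (l \<inter> frontier C)}"

definition rectangular_cell :: "point set set \<Rightarrow> point set \<Rightarrow> bool" where
  "rectangular_cell L C \<longleftrightarrow>
     C \<in> cells L \<and> bounded C \<and> card (bounding_segments L C) = 4 \<and>
     frontier C \<subseteq> \<Union>(bounding_segments L C)"

definition assoc_subsets :: "point set set \<Rightarrow> point set set set" where
  "assoc_subsets L = {bounding_segments L C | C. rectangular_cell L C}"

end

theory Submission
  imports Defs
begin

(* A rectangular cell is an open axis-parallel rectangle whose four bounding segments lie one on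
   each side: a ray from an interior point off all their lines leaves the cell through a segment
   perpendicular to it, so each orientation has segments on two distinct lines, and there are only
   four segments. Among three common bounding segments two are parallel; they fix the extent of
   every such cell in their normal direction, whereas the third one only supplies its lower or its
   upper side in the other direction. Of three such cells two therefore lie on the same side of the
   third segment, and these open rectangles overlap, whereas distinct cells are disjoint. *)

(* coord True is the x-coordinate, so a segment contained in axis_line True c is vertical. *)
definition coord :: "bool \<Rightarrow> point \<Rightarrow> real" where
  "coord b p = (if b then fst p else snd p)"

definition axis_unit :: "bool \<Rightarrow> point" where
  "axis_unit b = (if b then (1, 0) else (0, 1))"

definition axis_line :: "bool \<Rightarrow> real \<Rightarrow> point set" where
  "axis_line b c = {p. coord b p = c}"

definition rect :: "(bool \<Rightarrow> real) \<Rightarrow> (bool \<Rightarrow> real) \<Rightarrow> point set" where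
  "rect lo hi = {p. \<forall>b. lo b < coord b p \<and> coord b p < hi b}"

definition levels :: "point set set \<Rightarrow> bool \<Rightarrow> real set" where
  "levels S b = {c. \<exists>s\<in>S. s \<subseteq> axis_line b c}"

lemma coord_add [simp]: "coord b (p + q) = coord b p + coord b q"
  by (simp add: coord_def)

lemma coord_scaleR [simp]: "coord b (r *\<^sub>R p) = r * coord b p"
  by (simp add: coord_def)

lemma coord_axis_unit [simp]: "coord a (axis_unit b) = (if a = b then 1 else 0)"
  by (simp add: coord_def axis_unit_def)

lemma coord_Pair_fun [simp]: "coord b (x True, x False) = x b"
  by (cases b) (simp_all add: coord_def)

lemma point_eq_iff_coord: "p = q \<longleftrightarrow> (\<forall>b. coord b p = coord b q)"
  by (metis coord_def prod_eq_iff)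

lemma axis_unit_nonzero: "axis_unit b \<noteq> 0"
  by (simp add: axis_unit_def zero_prod_def)

lemma convex_axis_line: "convex (axis_line b c)"
  unfolding axis_line_def convex_def by (simp add: distrib_right[symmetric])

lemma connected_rect: "connected (rect lo hi)"
proof -
  have "rect lo hi = {lo True<..<hi True} \<times> {lo False<..<hi False}"
    by (auto simp: rect_def coord_def all_bool_eq)
  then show ?thesis
    by (simp add: convex_connected convex_Times)
qed

lemma rect_Int_nonempty:
  assumes "\<And>b. max (lo b) (lo' b) < min (hi b) (hi' b)"
  shows "rect lo hi \<inter> rect lo' hi' \<noteq> {}"
proof -
  define m where "m b = (max (lo b) (lo' b) + min (hi b) (hi' b)) / 2" for b
  have "max (lo b) (lo' b) < m b \<and> m b < min (hi b) (hi' b)" for b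
    using assms[of b] unfolding m_def by (auto simp: min_def max_def)
  then have "(m True, m False) \<in> rect lo hi \<inter> rect lo' hi'"
    by (simp add: rect_def)
  then show ?thesis by blast
qed

lemma axis_segment_on_axis_line:
  assumes "axis_segment s"
  obtains b c where "s \<subseteq> axis_line b c"
proof -
  obtain a a' where aa': "fst a = fst a' \<or> snd a = snd a'" "s = closed_segment a a'"
    using assms unfolding axis_segment_def by blast
  then obtain b where "coord b a = coord b a'"
    by (metis coord_def)
  then have "s \<subseteq> axis_line b (coord b a)"
    unfolding aa'(2) by (intro closed_segment_subset convex_axis_line) (auto simp: axis_line_def)
  then show thesis by (rule that)
qed

lemma axis_segment_axis_line_unique:
  assumes "axis_segment s" "s \<subseteq> axis_line b c" "s \<subseteq> axis_line b' c'"
  shows "b' = b \<and> c' = c"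
proof -
  obtain a a' where aa': "a \<noteq> a'" "a \<in> s" "a' \<in> s"
    using assms(1) unfolding axis_segment_def by blast
  have "b' = b"
  proof (rule ccontr)
    assume "b' \<noteq> b"
    have "coord x a = coord x a'" for x
    proof (cases "x = b")
      case True
      then show ?thesis
        using assms(2) aa'(2,3) by (auto simp: axis_line_def)
    next
      case False
      with \<open>b' \<noteq> b\<close> have "x = b'"
        by (cases x; cases b; cases b') auto
      then show ?thesis
        using assms(3) aa'(2,3) by (auto simp: axis_line_def)
    qed
    then have "a = a'"
      by (simp add: point_eq_iff_coord)
    with aa'(1) show False ..
  qed
  then show ?thesis
    using assms(2,3) aa'(2) unfolding axis_line_def by auto
qed

lemma axis_line_level:
  assumes "axis_segment s" "s \<subseteq> axis_line b c"
  shows "c = coord b (SOME p. p \<in> s)"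
proof -
  have "s \<noteq> {}"
    using assms(1) unfolding axis_segment_def by auto
  then show ?thesis
    using assms(2) unfolding axis_line_def by (metis (mono_tags) mem_Collect_eq some_in_eq subsetD)
qed

lemma finite_levels:
  assumes "finite S" "\<forall>s\<in>S. axis_segment s"
  shows "finite (levels S b)"
proof -
  have "levels S b \<subseteq> (\<lambda>s. coord b (SOME p. p \<in> s)) ` S"
    using assms(2) axis_line_level unfolding levels_def by blast
  then show ?thesis
    using assms(1) finite_surj by blast
qed

lemma rectangular_cell_open:
  assumes "finite L" "\<forall>s\<in>L. axis_segment s" "rectangular_cell L C"
  shows "open C"
proof -
  have "closed (\<Union>L)"
    using assms(1,2) by (auto intro!: closed_Union simp: axis_segment_def)
  then show ?thesis
    using assms(3) open_components unfolding rectangular_cell_def cells_def by blast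
qed

lemma rectangular_cell_nonempty: "rectangular_cell L C \<Longrightarrow> C \<noteq> {}"
  using in_components_nonempty unfolding rectangular_cell_def cells_def by blast

lemma rectangular_cells_eq_if_meet:
  assumes "rectangular_cell L C" "rectangular_cell L C'" "C \<inter> C' \<noteq> {}"
  shows "C = C'"
  using assms components_nonoverlap unfolding rectangular_cell_def cells_def by blast

lemma ray_meets_frontier:
  fixes C :: "'a::real_normed_vector set"
  assumes "open C" "bounded C" "p \<in> C" "w \<noteq> 0"
  obtains t where "t > 0" "p + t *\<^sub>R w \<in> frontier C"
proof -
  obtain B where B: "\<And>z. z \<in> C \<Longrightarrow> norm z \<le> B"
    using assms(2) bounded_iff by blast
  define R where "R = (norm p + \<bar>B\<bar> + 1) / norm w"
  have "R > 0"
    using assms(4) by (simp add: R_def add_nonneg_pos)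
  define z where "z = p + R *\<^sub>R w"
  have "norm (R *\<^sub>R w) = norm p + \<bar>B\<bar> + 1"
    using assms(4) \<open>R > 0\<close> by (simp add: R_def)
  then have "norm z > B"
    using norm_triangle_ineq2[of "R *\<^sub>R w" "-p"] unfolding z_def by (simp add: add.commute)
  then have "z \<notin> C"
    using B by force
  then obtain q where q: "q \<in> closed_segment p z" "q \<in> frontier C"
    using connected_Int_frontier[of "closed_segment p z" C] assms(3) by auto
  then obtain u where u: "0 \<le> u" "q = p + (u * R) *\<^sub>R w"
    unfolding z_def in_segment by (auto simp: algebra_simps)
  have "q \<noteq> p"
    using q(2) assms(1,3) by (auto simp: frontier_def interior_open)
  then have "u > 0"
    using u by auto
  then show thesis
    using that[of "u * R"] q(2) u(2) \<open>R > 0\<close> by simp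
qed

lemma exists_generic_point_near:
  assumes "open C" "p \<in> C" "\<And>b. finite (F b)"
  shows "\<exists>q\<in>C. \<forall>b. coord b q \<notin> F b \<and> coord b q < coord b p"
    and "\<exists>q\<in>C. \<forall>b. coord b q \<notin> F b \<and> coord b p < coord b q"
proof -
  obtain e where "e > 0" "ball p e \<subseteq> C"
    using assms(1,2) open_contains_ball by blast
  have box: "(x True, x False) \<in> C"
    if "\<And>b. coord b p - e / 2 < x b" "\<And>b. x b < coord b p + e / 2" for x
  proof -
    have "dist p (x True, x False) \<le> \<bar>fst p - x True\<bar> + \<bar>snd p - x False\<bar>"
      using sqrt_sum_squares_le_sum_abs[of "fst p - x True" "snd p - x False"]
      by (cases p) (simp add: dist_Pair_Pair dist_real_def)
    also have "\<dots> < e"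
      using that[of True] that[of False] by (auto simp: coord_def abs_if)
    finally show ?thesis
      using \<open>ball p e \<subseteq> C\<close> by auto
  qed
  have avoid: "\<exists>x. a < x \<and> x < a' \<and> x \<notin> F b" if "a < a'" for a a' b
    using infinite_Ioo[OF that] assms(3)[of b] by (meson ex_in_conv finite_subset greaterThanLessThan_iff subsetI)
  have "\<forall>b. \<exists>x. coord b p - e / 2 < x \<and> x < coord b p \<and> x \<notin> F b"
    using avoid \<open>e > 0\<close> by simp
  from choice[OF this] obtain x where x: "\<And>b. coord b p - e / 2 < x b"
    "\<And>b. x b < coord b p" "\<And>b. x b \<notin> F b"
    by blast
  have "x b < coord b p + e / 2" for b
    using x(2)[of b] \<open>e > 0\<close> by linarith
  with x(1) have "(x True, x False) \<in> C"
    by (rule box)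
  with x(2,3) show "\<exists>q\<in>C. \<forall>b. coord b q \<notin> F b \<and> coord b q < coord b p"
    by force
  have "\<forall>b. \<exists>x. coord b p < x \<and> x < coord b p + e / 2 \<and> x \<notin> F b"
    using avoid \<open>e > 0\<close> by simp
  from choice[OF this] obtain x where x: "\<And>b. coord b p < x b"
    "\<And>b. x b < coord b p + e / 2" "\<And>b. x b \<notin> F b"
    by blast
  have "coord b p - e / 2 < x b" for b
    using x(1)[of b] \<open>e > 0\<close> by linarith
  then have "(x True, x False) \<in> C"
    using x(2) by (rule box)
  with x(1,3) show "\<exists>q\<in>C. \<forall>b. coord b q \<notin> F b \<and> coord b p < coord b q"
    by force
qed

lemma ray_hits_level:
  assumes "open C" "bounded C" "frontier C \<subseteq> \<Union>S" "\<forall>s\<in>S. axis_segment s" "p \<in> C"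
    and "\<And>a. coord a p \<notin> levels S a" "r \<noteq> 0"
  obtains t where "t > 0" "coord b p + t * r \<in> levels S b"
proof -
  have "r *\<^sub>R axis_unit b \<noteq> 0"
    using assms(7) axis_unit_nonzero by simp
  then obtain t where t: "t > 0" "p + t *\<^sub>R (r *\<^sub>R axis_unit b) \<in> frontier C"
    by (rule ray_meets_frontier[OF assms(1,2,5)])
  define q where "q = p + t *\<^sub>R (r *\<^sub>R axis_unit b)"
  obtain s where s: "s \<in> S" "q \<in> s"
    using t(2) assms(3) unfolding q_def by blast
  obtain a c where "s \<subseteq> axis_line a c"
    using assms(4) s(1) axis_segment_on_axis_line by blast
  then have "c \<in> levels S a" "coord a q = c"
    using s unfolding levels_def axis_line_def by auto
  moreover have "coord a q = coord a p" if "a \<noteq> b"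
    using that by (simp add: q_def)
  ultimately have "a = b"
    using assms(6) by metis
  with \<open>c \<in> levels S a\<close> \<open>coord a q = c\<close> show thesis
    using that[OF t(1)] by (simp add: q_def mult.commute)
qed

lemma card_axis_segments_by_orientation:
  assumes "finite S" "\<forall>s\<in>S. axis_segment s"
  shows "card {s\<in>S. \<exists>c. s \<subseteq> axis_line True c} + card {s\<in>S. \<exists>c. s \<subseteq> axis_line False c} = card S"
proof -
  have "S = {s\<in>S. \<exists>c. s \<subseteq> axis_line True c} \<union> {s\<in>S. \<exists>c. s \<subseteq> axis_line False c}"
  proof (intro equalityI subsetI)
    fix s assume "s \<in> S"
    moreover obtain a c where "s \<subseteq> axis_line a c"
      using assms(2) axis_segment_on_axis_line \<open>s \<in> S\<close> by metis
    ultimately show "s \<in> {s\<in>S. \<exists>c. s \<subseteq> axis_line True c} \<union> {s\<in>S. \<exists>c. s \<subseteq> axis_line False c}"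
      by (cases a) auto
  qed auto
  moreover have "{s\<in>S. \<exists>c. s \<subseteq> axis_line True c} \<inter> {s\<in>S. \<exists>c. s \<subseteq> axis_line False c} = {}"
    using assms(2) axis_segment_axis_line_unique by blast
  ultimately show ?thesis
    using assms(1) card_Un_disjoint by (metis (no_types, lifting) finite_Un)
qed

lemma two_levels_per_axis:
  assumes "finite S" "card S = 4" "\<forall>s\<in>S. axis_segment s" "\<And>b. 2 \<le> card (levels S b)"
  shows "card (levels S b) = 2"
    and "\<And>s t c. s \<in> S \<Longrightarrow> t \<in> S \<Longrightarrow> s \<subseteq> axis_line b c \<Longrightarrow> t \<subseteq> axis_line b c \<Longrightarrow> s = t"
proof -
  define par where "par a = {s\<in>S. \<exists>c. s \<subseteq> axis_line a c}" for a
  define level where "level a s = coord a (SOME p. p \<in> s)" for a s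
  have level: "level a s = c" if "s \<in> S" "s \<subseteq> axis_line a c" for a s c
    using axis_line_level assms(3) that unfolding level_def by metis
  have levels_eq: "levels S a = level a ` par a" for a
  proof
    show "levels S a \<subseteq> level a ` par a"
      unfolding levels_def par_def using level by blast
    show "level a ` par a \<subseteq> levels S a"
      unfolding levels_def par_def using level by blast
  qed
  have fin_par: "finite (par a)" for a
    using assms(1) unfolding par_def by auto
  have le: "card (levels S a) \<le> card (par a)" for a
    unfolding levels_eq by (rule card_image_le[OF fin_par])
  have "card (par True) = 2 \<and> card (levels S True) = 2" "card (par False) = 2 \<and> card (levels S False) = 2"
    using le[of True] le[of False] assms(4)[of True] assms(4)[of False] assms(2)
      card_axis_segments_by_orientation[OF assms(1,3)] unfolding par_def by linarith+
  then have card2: "card (par a) = 2 \<and> card (levels S a) = 2" for a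
    by (cases a) simp_all
  then show "card (levels S b) = 2"
    by blast
  have "card (level b ` par b) = card (par b)"
    using card2[of b] levels_eq[of b] by simp
  then have inj: "inj_on (level b) (par b)"
    by (rule eq_card_imp_inj_on[OF fin_par])
  show "s = t" if "s \<in> S" "t \<in> S" "s \<subseteq> axis_line b c" "t \<subseteq> axis_line b c" for s t c
  proof (rule inj_onD[OF inj])
    show "level b s = level b t"
      using level that by simp
    show "s \<in> par b" "t \<in> par b"
      using that unfolding par_def by blast+
  qed
qed

lemma levels_around_generic_point:
  assumes "open C" "bounded C" "frontier C \<subseteq> \<Union>S" "\<forall>s\<in>S. axis_segment s" "p \<in> C"
    and "\<And>a. coord a p \<notin> levels S a"
  shows "\<exists>c\<in>levels S b. c < coord b p" and "\<exists>c\<in>levels S b. coord b p < c"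
proof -
  obtain t where "t > 0" "coord b p + t * -1 \<in> levels S b"
    using ray_hits_level[OF assms] by (metis neg_equal_0_iff_equal one_neq_zero)
  then show "\<exists>c\<in>levels S b. c < coord b p"
    by (intro bexI) auto
  obtain t where "t > 0" "coord b p + t * 1 \<in> levels S b"
    using ray_hits_level[OF assms] by (metis one_neq_zero)
  then show "\<exists>c\<in>levels S b. coord b p < c"
    by (intro bexI) auto
qed

lemma open_subset_rect_if_generic_points:
  assumes "open C" "\<And>b. finite (F b)"
    and "\<And>q. q \<in> C \<Longrightarrow> (\<And>a. coord a q \<notin> F a) \<Longrightarrow> q \<in> rect lo hi"
  shows "C \<subseteq> rect lo hi"
proof
  fix p assume "p \<in> C"
  obtain q where q: "q \<in> C" "\<And>a. coord a q \<notin> F a" "\<And>a. coord a q < coord a p"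
    using exists_generic_point_near(1)[where F = F, OF assms(1) \<open>p \<in> C\<close> assms(2)] by blast
  obtain q' where q': "q' \<in> C" "\<And>a. coord a q' \<notin> F a" "\<And>a. coord a p < coord a q'"
    using exists_generic_point_near(2)[where F = F, OF assms(1) \<open>p \<in> C\<close> assms(2)] by blast
  have bounds: "lo a < coord a q" "coord a q' < hi a" for a
    using assms(3)[OF q(1,2)] assms(3)[OF q'(1,2)] unfolding rect_def by blast+
  have "lo a < coord a p \<and> coord a p < hi a" for a
    using bounds[of a] q(3)[of a] q'(3)[of a] by linarith
  then show "p \<in> rect lo hi"
    by (simp add: rect_def)
qed

lemma rect_Int_axis_segments_on_sides:
  assumes "\<forall>s\<in>S. axis_segment s" "\<And>b. levels S b \<subseteq> {lo b, hi b}"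
  shows "rect lo hi \<inter> \<Union>S = {}"
proof -
  have "q \<notin> rect lo hi" if "s \<in> S" "q \<in> s" for s q
  proof -
    obtain a c where "s \<subseteq> axis_line a c"
      using assms(1) \<open>s \<in> S\<close> axis_segment_on_axis_line by blast
    then have "coord a q \<in> levels S a"
      using that unfolding levels_def axis_line_def by auto
    then have "coord a q = lo a \<or> coord a q = hi a"
      using assms(2)[of a] by blast
    moreover have "lo a < coord a q \<and> coord a q < hi a" if "q \<in> rect lo hi"
      using that unfolding rect_def by blast
    ultimately show ?thesis
      by auto
  qed
  then show ?thesis
    by blast
qed

lemma rectangular_cell_eq_rect:
  assumes "finite L" "\<forall>s\<in>L. axis_segment s" "rectangular_cell L C"
  defines "S \<equiv> bounding_segments L C"
  obtains lo hi where "\<And>b. lo b < hi b" "\<And>b. levels S b = {lo b, hi b}" "C = rect lo hi"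
    "\<And>s t b c. s \<in> S \<Longrightarrow> t \<in> S \<Longrightarrow> s \<subseteq> axis_line b c \<Longrightarrow> t \<subseteq> axis_line b c \<Longrightarrow> s = t"
proof -
  have S: "card S = 4" "frontier C \<subseteq> \<Union>S" "\<forall>s\<in>S. axis_segment s"
    using assms(2,3) unfolding S_def rectangular_cell_def bounding_segments_def by auto
  then have "finite S"
    by (metis card.infinite zero_neq_numeral)
  have C: "open C" "bounded C" "C \<noteq> {}"
    using rectangular_cell_open[OF assms(1-3)] rectangular_cell_nonempty[OF assms(3)] assms(3)
    unfolding rectangular_cell_def by auto
  have fin: "finite (levels S b)" for b
    using finite_levels[OF \<open>finite S\<close> S(3)] .
  note around = levels_around_generic_point[OF C(1,2) S(2,3)]
  obtain p0 where p0: "p0 \<in> C" "\<And>a. coord a p0 \<notin> levels S a"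
    using exists_generic_point_near(1)[where F = "levels S", OF C(1) _ fin] C(3) by blast
  have "2 \<le> card (levels S b)" for b
  proof -
    obtain c c' where "c \<in> levels S b" "c' \<in> levels S b" "c < c'"
      using around[OF p0, of b] by (meson less_trans)
    then show ?thesis
      using card_mono[OF fin[of b], of "{c, c'}"] by simp
  qed
  note two = two_levels_per_axis[OF \<open>finite S\<close> S(1,3) this]
  define lo where "lo b = Min (levels S b)" for b
  define hi where "hi b = Max (levels S b)" for b
  have lohi: "lo b < hi b \<and> levels S b = {lo b, hi b}" for b
  proof -
    obtain c c' where "levels S b = {c, c'}" "c \<noteq> c'"
      using two(1)[of b] card_2_iff by metis
    then show ?thesis
      unfolding lo_def hi_def by (auto simp: min_def max_def)
  qed
  have generic_in_rect: "q \<in> rect lo hi" if generic: "q \<in> C" "\<And>a. coord a q \<notin> levels S a" for q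
  proof -
    have "lo b < coord b q \<and> coord b q < hi b" for b
    proof -
      obtain c c' where "c \<in> levels S b" "c < coord b q" "c' \<in> levels S b" "coord b q < c'"
        using around[OF generic, of b] by blast
      then show ?thesis
        unfolding lo_def hi_def using Min_le[OF fin[of b]] Max_ge[OF fin[of b]]
        by (meson le_less_trans less_le_trans)
    qed
    then show ?thesis
      by (simp add: rect_def)
  qed
  have "C \<subseteq> rect lo hi"
    using open_subset_rect_if_generic_points[OF C(1) fin generic_in_rect] .
  moreover have "rect lo hi \<inter> frontier C = {}"
    using rect_Int_axis_segments_on_sides[OF S(3)] lohi S(2) by blast
  ultimately have "C = rect lo hi"
    using connected_Int_frontier[OF connected_rect, of lo hi C] C(3) by blast
  show thesis
  proof (rule that)
    show "lo b < hi b" "levels S b = {lo b, hi b}" for b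
      using lohi by blast+
  qed (fact \<open>C = rect lo hi\<close>, fact two(2))
qed

lemma rectangular_cell_through_three_segments:
  assumes "finite L" "\<forall>s\<in>L. axis_segment s" "rectangular_cell L C"
    and "{s, t, u} \<subseteq> bounding_segments L C" "s \<noteq> t" "s \<noteq> u" "t \<noteq> u"
    and "s \<subseteq> axis_line b c" "t \<subseteq> axis_line b c'" "u \<subseteq> axis_line b' d"
  shows "b' \<noteq> b"
    and "\<exists>lo hi. C = rect lo hi \<and> (\<forall>a. lo a < hi a) \<and> lo b = min c c' \<and> hi b = max c c' \<and>
           (lo b' = d \<or> hi b' = d)"
proof -
  let ?S = "bounding_segments L C"
  obtain lo hi where lohi: "\<And>a. lo a < hi a" "\<And>a. levels ?S a = {lo a, hi a}" "C = rect lo hi"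
    and collinear: "\<And>v w a x. v \<in> ?S \<Longrightarrow> w \<in> ?S \<Longrightarrow> v \<subseteq> axis_line a x \<Longrightarrow> w \<subseteq> axis_line a x \<Longrightarrow> v = w"
    using rectangular_cell_eq_rect[OF assms(1-3)] by blast
  have side: "x \<in> {lo a, hi a}" if "v \<in> ?S" "v \<subseteq> axis_line a x" for v a x
  proof -
    have "x \<in> levels ?S a"
      using that unfolding levels_def by blast
    then show ?thesis
      using lohi(2) by blast
  qed
  have "c \<noteq> c'"
    using collinear assms(4,5,8,9) by blast
  then have b_sides: "lo b = min c c'" "hi b = max c c'"
    using side[of s b c] side[of t b c'] assms(4,8,9) lohi(1)[of b] by auto
  show "b' \<noteq> b"
  proof
    assume "b' = b"
    then have "d = c \<or> d = c'"
      using side[of s b c] side[of t b c'] side[of u b' d] assms(4,8-10) \<open>c \<noteq> c'\<close> by auto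
    then show False
      using collinear assms(4,6,7,8-10) \<open>b' = b\<close> by blast
  qed
  show "\<exists>lo hi. C = rect lo hi \<and> (\<forall>a. lo a < hi a) \<and> lo b = min c c' \<and> hi b = max c c' \<and>
           (lo b' = d \<or> hi b' = d)"
    using lohi(1,3) b_sides side[of u b' d] assms(4,10) by blast
qed

lemma at_most_two_rectangular_cells_through_parallel:
  assumes "finite L" "\<forall>s\<in>L. axis_segment s"
    and cells: "rectangular_cell L C1" "rectangular_cell L C2" "rectangular_cell L C3"
    and through: "{s, t, u} \<subseteq> bounding_segments L C1" "{s, t, u} \<subseteq> bounding_segments L C2"
      "{s, t, u} \<subseteq> bounding_segments L C3"
    and distinct: "s \<noteq> t" "s \<noteq> u" "t \<noteq> u"
    and lines: "s \<subseteq> axis_line b c" "t \<subseteq> axis_line b c'" "u \<subseteq> axis_line b' d"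
  shows "C1 = C2 \<or> C1 = C3 \<or> C2 = C3"
proof -
  note through_cell = rectangular_cell_through_three_segments[OF assms(1,2) _ _ distinct lines]
  have "b' \<noteq> b"
    by (rule through_cell(1)[OF cells(1) through(1)])
  then have axes: "a = b \<or> a = b'" for a
    by (cases a; cases b; cases b') auto
  have meet: "C = C'"
    if "rectangular_cell L C" "rectangular_cell L C'" "C = rect lo hi" "C' = rect lo' hi'"
      "\<forall>a. lo a < hi a" "\<forall>a. lo' a < hi' a" "lo b = lo' b" "hi b = hi' b"
      "lo b' = d \<or> hi b' = d" "lo' b' = d \<or> hi' b' = d" "lo b' = d \<longleftrightarrow> lo' b' = d"
    for C C' lo hi lo' hi'
  proof (rule rectangular_cells_eq_if_meet[OF that(1,2)])
    have "max (lo a) (lo' a) < min (hi a) (hi' a)" for a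
      using axes[of a] that(5,6)[rule_format, of a] that(7-11) by (auto simp: max_def min_def)
    then show "C \<inter> C' \<noteq> {}"
      unfolding that(3,4) by (rule rect_Int_nonempty)
  qed
  obtain lo1 hi1 where 1: "C1 = rect lo1 hi1" "\<forall>a. lo1 a < hi1 a" "lo1 b = min c c'"
    "hi1 b = max c c'" "lo1 b' = d \<or> hi1 b' = d"
    using through_cell(2)[OF cells(1) through(1)] by blast
  obtain lo2 hi2 where 2: "C2 = rect lo2 hi2" "\<forall>a. lo2 a < hi2 a" "lo2 b = min c c'"
    "hi2 b = max c c'" "lo2 b' = d \<or> hi2 b' = d"
    using through_cell(2)[OF cells(2) through(2)] by blast
  obtain lo3 hi3 where 3: "C3 = rect lo3 hi3" "\<forall>a. lo3 a < hi3 a" "lo3 b = min c c'"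
    "hi3 b = max c c'" "lo3 b' = d \<or> hi3 b' = d"
    using through_cell(2)[OF cells(3) through(3)] by blast
  have "(lo1 b' = d \<longleftrightarrow> lo2 b' = d) \<or> (lo1 b' = d \<longleftrightarrow> lo3 b' = d) \<or> (lo2 b' = d \<longleftrightarrow> lo3 b' = d)"
    by blast
  then show ?thesis
  proof (elim disjE)
    assume "lo1 b' = d \<longleftrightarrow> lo2 b' = d"
    then show ?thesis
      using meet[OF cells(1,2) 1(1) 2(1) 1(2) 2(2) _ _ 1(5) 2(5)] 1(3,4) 2(3,4) by simp
  next
    assume "lo1 b' = d \<longleftrightarrow> lo3 b' = d"
    then show ?thesis
      using meet[OF cells(1,3) 1(1) 3(1) 1(2) 3(2) _ _ 1(5) 3(5)] 1(3,4) 3(3,4) by simp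
  next
    assume "lo2 b' = d \<longleftrightarrow> lo3 b' = d"
    then show ?thesis
      using meet[OF cells(2,3) 2(1) 3(1) 2(2) 3(2) _ _ 2(5) 3(5)] 2(3,4) 3(3,4) by simp
  qed
qed

lemma at_most_two_rectangular_cells_through:
  assumes "finite L" "\<forall>s\<in>L. axis_segment s" "{s, t, u} \<subseteq> L"
    and cells: "rectangular_cell L C1" "rectangular_cell L C2" "rectangular_cell L C3"
    and through: "{s, t, u} \<subseteq> bounding_segments L C1" "{s, t, u} \<subseteq> bounding_segments L C2"
      "{s, t, u} \<subseteq> bounding_segments L C3"
    and distinct: "s \<noteq> t" "s \<noteq> u" "t \<noteq> u"
  shows "C1 = C2 \<or> C1 = C3 \<or> C2 = C3"
proof -
  note parallel = at_most_two_rectangular_cells_through_parallel[OF assms(1,2) cells]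
  have "axis_segment s" "axis_segment t" "axis_segment u"
    using assms(2,3) by auto
  then obtain b c b' c' b'' c'' where
    lines: "s \<subseteq> axis_line b c" "t \<subseteq> axis_line b' c'" "u \<subseteq> axis_line b'' c''"
    by (meson axis_segment_on_axis_line)
  have perm: "{s, u, t} = {s, t, u}" "{t, u, s} = {s, t, u}"
    by auto
  have "b' = b \<or> b'' = b \<or> b'' = b'"
    by (cases b; cases b'; cases b'') auto
  then show ?thesis
  proof (elim disjE)
    assume "b' = b"
    show ?thesis
      by (rule parallel[OF through distinct lines(1) lines(2)[unfolded \<open>b' = b\<close>] lines(3)])
  next
    assume "b'' = b"
    show ?thesis
      by (rule parallel[of s u t, unfolded perm, OF through distinct(2,1) distinct(3)[symmetric]
            lines(1) lines(3)[unfolded \<open>b'' = b\<close>] lines(2)])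
  next
    assume "b'' = b'"
    show ?thesis
      by (rule parallel[of t u s, unfolded perm, OF through distinct(3) distinct(1)[symmetric]
            distinct(2)[symmetric] lines(2) lines(3)[unfolded \<open>b'' = b'\<close>] lines(1)])
  qed
qed

theorem lemma2:
  fixes L :: "point set set" and l l' l'' :: "point set"
  assumes "finite L"
    and "\<forall>s\<in>L. axis_segment s"
    and "l \<in> L" and "l' \<in> L" and "l'' \<in> L"
    and "l \<noteq> l'" and "l \<noteq> l''" and "l' \<noteq> l''"
  shows "card {S \<in> assoc_subsets L. {l, l', l''} \<subseteq> S} \<le> 2"
proof (rule ccontr)
  let ?A = "{S \<in> assoc_subsets L. {l, l', l''} \<subseteq> S}"
  assume "\<not> card ?A \<le> 2"
  then have "3 \<le> card ?A"
    by simp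
  then obtain T where "T \<subseteq> ?A" "card T = 3"
    by (rule obtain_subset_with_card_n)
  then obtain S1 S2 S3 where S: "{S1, S2, S3} \<subseteq> ?A" "S1 \<noteq> S2" "S1 \<noteq> S3" "S2 \<noteq> S3"
    unfolding card_3_iff by auto
  then obtain C1 C2 C3 where cells: "rectangular_cell L C1" "rectangular_cell L C2" "rectangular_cell L C3"
    and "S1 = bounding_segments L C1" "S2 = bounding_segments L C2" "S3 = bounding_segments L C3"
    unfolding assoc_subsets_def by auto
  with S have "C1 \<noteq> C2" "C1 \<noteq> C3" "C2 \<noteq> C3" and through:
    "{l, l', l''} \<subseteq> bounding_segments L C1" "{l, l', l''} \<subseteq> bounding_segments L C2"
    "{l, l', l''} \<subseteq> bounding_segments L C3"
    by auto
  moreover have "{l, l', l''} \<subseteq> L"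
    using assms(3-5) by simp
  ultimately show False
    using at_most_two_rectangular_cells_through[OF assms(1,2) _ cells through assms(6-8)] by blast
qed

end
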